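(* Let $\kappa$ be an infinite cardinal and let $(\mathcal U_\xi)_{\xi\in\kappa}$ be a family of non-principal ultrafilters on $\kappa$. Then there exists $X\subseteq\kappa$ with $|X|=\kappa$ such that $X\notin\mathcal U_\xi$ for every $\xi\in X$. *)

theory Defs
  imports Main "HOL-Library.Equipollence"
begin

definition ultrafilter_on :: "'a set \<Rightarrow> 'a set set \<Rightarrow> bool" where
  "ultrafilter_on S U \<longleftrightarrow>
     (\<forall>A\<in>U. A \<subseteq> S) \<and> S \<in> U \<and> {} \<notin> U \<and>
     (\<forall>A B. A \<in> U \<longrightarrow> B \<in> U \<longrightarrow> A \<inter> B \<in> U) \<and>
     (\<forall>A B. A \<in> U \<longrightarrow> A \<subseteq> B \<longrightarrow> B \<subseteq> S \<longrightarrow> B \<in> U) \<and>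
     (\<forall>A. A \<subseteq> S \<longrightarrow> A \<in> U \<or> S - A \<in> U)"

definition principal_on :: "'a set \<Rightarrow> 'a set set \<Rightarrow> bool" where
  "principal_on S U \<longleftrightarrow> (\<exists>x\<in>S. U = {A. A \<subseteq> S \<and> x \<in> A})"

definition nonprincipal_ultrafilter_on :: "'a set \<Rightarrow> 'a set set \<Rightarrow> bool" where
  "nonprincipal_ultrafilter_on S U \<longleftrightarrow> ultrafilter_on S U \<and> \<not> principal_on S U"

end

theory Submission
  imports Defs "HOL-Library.Disjoint_Sets"
begin

text \<open>Since \<open>\<kappa> \<times> \<kappa> \<approx> \<kappa>\<close>, \<open>\<kappa>\<close> splits into \<open>\<kappa>\<close> disjoint pieces \<open>R\<^sub>a\<close> of size \<open>\<kappa>\<close>.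
  If some piece \<open>R\<^sub>a\<close> lies in no \<open>\<U>\<^sub>\<xi>\<close> with \<open>\<xi> \<in> R\<^sub>a\<close>, it is the required set.
  Otherwise choose for every \<open>a\<close> a point \<open>x\<^sub>a \<in> R\<^sub>a\<close> with \<open>R\<^sub>a \<in> \<U>\<^bsub>x\<^sub>a\<^esub>\<close> and
  let \<open>X = {x\<^sub>a | a \<in> \<kappa>}\<close>: if \<open>X \<in> \<U>\<^bsub>x\<^sub>a\<^esub>\<close>, then so is \<open>X \<inter> R\<^sub>a = {x\<^sub>a}\<close>, which
  is impossible for a nonprincipal ultrafilter.\<close>

lemma ultrafilter_on_subset: "ultrafilter_on S U \<Longrightarrow> A \<in> U \<Longrightarrow> A \<subseteq> S"
  unfolding ultrafilter_on_def by (elim conjE) (erule bspec)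

lemma ultrafilter_on_empty: "ultrafilter_on S U \<Longrightarrow> {} \<notin> U"
  unfolding ultrafilter_on_def by (elim conjE)

lemma ultrafilter_on_Int: "ultrafilter_on S U \<Longrightarrow> A \<in> U \<Longrightarrow> B \<in> U \<Longrightarrow> A \<inter> B \<in> U"
  unfolding ultrafilter_on_def by (elim conjE) blast

lemma ultrafilter_on_mono: "ultrafilter_on S U \<Longrightarrow> A \<in> U \<Longrightarrow> A \<subseteq> B \<Longrightarrow> B \<subseteq> S \<Longrightarrow> B \<in> U"
  unfolding ultrafilter_on_def by (elim conjE) blast

lemma nonprincipal_ultrafilter_on_singleton_notin:
  assumes "nonprincipal_ultrafilter_on S U"
  shows "{x} \<notin> U"
proof
  assume x: "{x} \<in> U"
  have uf: "ultrafilter_on S U" and np: "\<not> principal_on S U"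
    using assms unfolding nonprincipal_ultrafilter_on_def by auto
  have "x \<in> S"
    using ultrafilter_on_subset[OF uf x] by simp
  moreover have "U = {A. A \<subseteq> S \<and> x \<in> A}"
  proof (intro set_eqI iffI)
    fix A assume "A \<in> U"
    then have "A \<inter> {x} \<noteq> {}"
      using ultrafilter_on_Int[OF uf _ x] ultrafilter_on_empty[OF uf] by metis
    then show "A \<in> {A. A \<subseteq> S \<and> x \<in> A}"
      using ultrafilter_on_subset[OF uf \<open>A \<in> U\<close>] by blast
  next
    fix A assume "A \<in> {A. A \<subseteq> S \<and> x \<in> A}"
    then show "A \<in> U"
      using ultrafilter_on_mono[OF uf x] by simp
  qed
  ultimately show False
    using np unfolding principal_on_def by blast
qed

lemma nonprincipal_ultrafilter_on_Int_singleton: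
  assumes "nonprincipal_ultrafilter_on S U" and "A \<in> U" and "A \<inter> B = {x}"
  shows "B \<notin> U"
proof
  assume "B \<in> U"
  have "ultrafilter_on S U"
    using assms(1) unfolding nonprincipal_ultrafilter_on_def by (elim conjE)
  then have "A \<inter> B \<in> U"
    using assms(2) \<open>B \<in> U\<close> by (rule ultrafilter_on_Int)
  with assms(3) nonprincipal_ultrafilter_on_singleton_notin[OF assms(1)] show False
    by simp
qed

lemma infinite_disjoint_family_eqpoll:
  assumes "infinite A"
  obtains R where "disjoint_family_on R A"
    and "\<And>a. a \<in> A \<Longrightarrow> R a \<subseteq> A" and "\<And>a. a \<in> A \<Longrightarrow> R a \<approx> A"
proof -
  have "A \<times> A \<approx> A"
    using card_of_Times_same_infinite[OF assms] eqpoll_iff_card_of_ordIso by blast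
  then obtain g where g: "bij_betw g (A \<times> A) A"
    unfolding eqpoll_def by blast
  have inj: "inj_on g ({a} \<times> A)" if "a \<in> A" for a
    by (rule inj_on_subset[OF bij_betw_imp_inj_on[OF g]]) (use that in blast)
  have "disjoint_family_on (\<lambda>a. g ` ({a} \<times> A)) A"
    unfolding disjoint_family_on_def
  proof (intro ballI impI)
    fix a b assume "a \<in> A" "b \<in> A" "a \<noteq> b"
    then have "g ` ({a} \<times> A) \<inter> g ` ({b} \<times> A) = g ` (({a} \<times> A) \<inter> ({b} \<times> A))"
      by (intro inj_on_image_Int[OF bij_betw_imp_inj_on[OF g], symmetric]) auto
    with \<open>a \<noteq> b\<close> show "g ` ({a} \<times> A) \<inter> g ` ({b} \<times> A) = {}"
      by auto
  qed
  moreover have "g ` ({a} \<times> A) \<subseteq> A" if "a \<in> A" for a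
    using that bij_betw_imp_surj_on[OF g] by blast
  moreover have "g ` ({a} \<times> A) \<approx> A" if "a \<in> A" for a
    using eqpoll_trans[OF inj_on_image_eqpoll_self[OF inj[OF that]] times_singleton_eqpoll] .
  ultimately show thesis
    using that by blast
qed

lemma disjoint_family_on_transversal_inj_on:
  assumes "disjoint_family_on R A" and "\<And>a. a \<in> A \<Longrightarrow> x a \<in> R a"
  shows "inj_on x A"
proof (rule inj_onI)
  fix a b assume "a \<in> A" "b \<in> A" "x a = x b"
  then have "R a \<inter> R b \<noteq> {}"
    using assms(2) by (metis IntI empty_iff)
  with \<open>a \<in> A\<close> \<open>b \<in> A\<close> show "a = b"
    using disjoint_family_onD[OF assms(1)] by blast
qed

lemma transversal_notin_nonprincipal_ultrafilters:
  assumes "disjoint_family_on R A"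
    and "\<And>a. a \<in> A \<Longrightarrow> x a \<in> R a \<and> R a \<in> U (x a)"
    and "\<And>a. a \<in> A \<Longrightarrow> nonprincipal_ultrafilter_on S (U (x a))"
  shows "\<forall>\<xi>\<in>x ` A. x ` A \<notin> U \<xi>"
proof
  fix \<xi> assume "\<xi> \<in> x ` A"
  then obtain a where a: "a \<in> A" and \<xi>: "\<xi> = x a"
    by blast
  have "R a \<inter> x ` A = {x a}"
  proof (intro equalityI subsetI)
    fix y assume "y \<in> R a \<inter> x ` A"
    then obtain b where b: "b \<in> A" and "y = x b" and "y \<in> R a"
      by blast
    moreover have "y \<in> R b"
      using assms(2) b \<open>y = x b\<close> by blast
    ultimately have "a = b"
      using disjoint_family_onD[OF assms(1) a b] by blast
    with \<open>y = x b\<close> show "y \<in> {x a}"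
      by simp
  qed (use assms(2) a in blast)
  moreover have "R a \<in> U (x a)"
    using assms(2) a by blast
  ultimately show "x ` A \<notin> U \<xi>"
    unfolding \<xi> using nonprincipal_ultrafilter_on_Int_singleton[OF assms(3)[OF a]] by blast
qed

theorem theorem3:
  fixes U :: "'k \<Rightarrow> 'k set set"
  assumes "infinite (UNIV :: 'k set)"
    and "\<And>\<xi>. nonprincipal_ultrafilter_on UNIV (U \<xi>)"
  shows "\<exists>X :: 'k set. X \<approx> (UNIV :: 'k set) \<and> (\<forall>\<xi>\<in>X. X \<notin> U \<xi>)"
proof -
  obtain R :: "'k \<Rightarrow> 'k set" where R: "disjoint_family R" and R_size: "\<And>a. R a \<approx> (UNIV :: 'k set)"
  proof (rule infinite_disjoint_family_eqpoll[OF assms(1)])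
    fix R :: "'k \<Rightarrow> 'k set"
    assume "disjoint_family R" and "\<And>a. a \<in> UNIV \<Longrightarrow> R a \<approx> (UNIV :: 'k set)"
    then show thesis
      by (intro that) simp_all
  qed
  show ?thesis
  proof (cases "\<exists>a. \<forall>\<xi>\<in>R a. R a \<notin> U \<xi>")
    case True
    then show ?thesis
      using R_size by blast
  next
    case False
    then obtain x where x: "\<And>a. x a \<in> R a \<and> R a \<in> U (x a)"
      by metis
    have "inj x"
      using disjoint_family_on_transversal_inj_on[OF R] x by blast
    then have "range x \<approx> (UNIV :: 'k set)"
      by (rule inj_on_image_eqpoll_self)
    moreover have "\<forall>\<xi>\<in>range x. range x \<notin> U \<xi>"
      using transversal_notin_nonprincipal_ultrafilters[OF R x assms(2)] by simp
    ultimately show ?thesis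
      by blast
  qed
qed

end
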